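(* Let $n\ge 1$, let $\Omega\subseteq\mathbb R^n$ be open, and let $y:\Omega\to\mathbb R$ be a function of class $C^2$. Let $\mathbf Q$ be an arbitrary real $(n+2)\times(n+2)$ matrix, and suppose that for every $\mathbf x\in\Omega$, $$\mathbf v(\mathbf x)^\top\mathbf Q\,\mathbf v(\mathbf x)=0,\qquad\text{where }\mathbf v(\mathbf x)=\begin{bmatrix}\mathbf x\\ y(\mathbf x)\\ 1\end{bmatrix}\in\mathbb R^{n+2}.$$ Then, with $\mathbf H_y$ the Hessian matrix of $y$ and $\Delta_y$ the discriminant (defined below) of the left-hand side with respect to the variable $y$, the formula $$\det\!\big(\mp\mathbf H_y(\mathbf x)\big)\cdot\Delta_y(\mathbf x)^{n/2+1}=-\det\!\big(\mathbf Q+\mathbf Q^\top\big)$$ holds, where the sign $\mp$ depends on the selected branch of the square root function (i.e. on which root of the quadratic equation in $y$ the function $y$ is).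
   Context: The Hessian matrix $\mathbf H_y(\mathbf x)$ is the $n\times n$ matrix with entries $\partial^2 y/\partial x_i\partial x_j(\mathbf x)$. For fixed $\mathbf x$, the expression $\mathbf w^\top\mathbf Q\mathbf w$ with $\mathbf w=(\mathbf x, t, 1)^\top$ is a polynomial in the scalar variable $t$ of the form $\alpha t^2+\beta(\mathbf x)t+\gamma(\mathbf x)$, where $\alpha=Q_{n+1,n+1}$, $\beta(\mathbf x)=\sum_{i=1}^n (Q_{i,n+1}+Q_{n+1,i})x_i+Q_{n+1,n+2}+Q_{n+2,n+1}$ and $\gamma(\mathbf x)=\sum_{i,j=1}^n Q_{ij}x_ix_j+\sum_{i=1}^n(Q_{i,n+2}+Q_{n+2,i})x_i+Q_{n+2,n+2}$. The discriminant with respect to $y$ is $\Delta_y(\mathbf x)=\beta(\mathbf x)^2-4\alpha\gamma(\mathbf x)$ (a quadratic polynomial in $\mathbf x$). Here $\det$ denotes the determinant and $\Delta_y(\mathbf x)^{n/2+1}$ is the real power of the nonnegative number $\Delta_y(\mathbf x)$. The sign $\mp$ means $\det(-\mathbf H_y)$ or $\det(\mathbf H_y)$ according to the branch: writing (when $\alpha\neq0$) $y=\frac{-\beta\pm\sqrt{\Delta_y}}{2\alpha}$, the sign in the formula is opposite to the sign $\pm$ here; it only matters for odd $n$. *)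

theory Defs
  imports "HOL-Analysis.Analysis"
begin

text \<open>Index type for R^(n+2): the n coordinates of x, then the slot of y (T), then the constant slot (C).\<close>
datatype 'n ext_idx = X 'n | T | C

lemma UNIV_ext_idx: "(UNIV :: 'n ext_idx set) = range X \<union> {T, C}"
  by (auto intro: ext_idx.exhaust)

instance ext_idx :: (finite) finite
  by standard (simp add: UNIV_ext_idx)

definition partial_deriv :: "(real^'n \<Rightarrow> real) \<Rightarrow> 'n \<Rightarrow> real^'n \<Rightarrow> real" where
  "partial_deriv f i x = frechet_derivative f (at x) (axis i 1)"

definition hessian :: "(real^'n \<Rightarrow> real) \<Rightarrow> real^'n \<Rightarrow> real^'n^'n" where
  "hessian f x = (\<chi> i j. partial_deriv (partial_deriv f j) i x)"

definition C2_on :: "(real^'n) set \<Rightarrow> (real^'n \<Rightarrow> real) \<Rightarrow> bool" where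
  "C2_on S f \<longleftrightarrow>
     (\<forall>x\<in>S. f differentiable (at x)) \<and>
     (\<forall>j. \<forall>x\<in>S. partial_deriv f j differentiable (at x)) \<and>
     (\<forall>i j. continuous_on S (partial_deriv (partial_deriv f j) i))"

definition ext_vec :: "real^'n::finite \<Rightarrow> real \<Rightarrow> real^('n ext_idx)" where
  "ext_vec x t = (\<chi> k. case k of X i \<Rightarrow> x $ i | T \<Rightarrow> t | C \<Rightarrow> 1)"

text \<open>Coefficients of w^T Q w = alpha t^2 + beta(x) t + gamma(x).\<close>
definition qalpha :: "real^('n::finite ext_idx)^('n ext_idx) \<Rightarrow> real" where
  "qalpha Q = Q $ T $ T"

definition qbeta :: "real^('n::finite ext_idx)^('n ext_idx) \<Rightarrow> real^'n \<Rightarrow> real" where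
  "qbeta Q x = (\<Sum>i\<in>UNIV. (Q $ X i $ T + Q $ T $ X i) * x $ i) + Q $ T $ C + Q $ C $ T"

definition qgamma :: "real^('n::finite ext_idx)^('n ext_idx) \<Rightarrow> real^'n \<Rightarrow> real" where
  "qgamma Q x = (\<Sum>i\<in>UNIV. \<Sum>j\<in>UNIV. Q $ X i $ X j * x $ i * x $ j)
     + (\<Sum>i\<in>UNIV. (Q $ X i $ C + Q $ C $ X i) * x $ i) + Q $ C $ C"

definition qdiscr :: "real^('n::finite ext_idx)^('n ext_idx) \<Rightarrow> real^'n \<Rightarrow> real" where
  "qdiscr Q x = (qbeta Q x)^2 - 4 * qalpha Q * qgamma Q x"

end

theory Submission
  imports Defs
begin

text \<open>
  Write \<open>S = Q + Q\<^sup>T\<close>, \<open>v(x) = (x, y(x), 1)\<close> and \<open>F = (S v)\<^sub>T = 2 \<alpha> y + \<beta>\<close>.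
  Differentiating \<open>v\<^sup>T Q v = 0\<close> once shows that the tangent vectors \<open>P\<^sub>i = \<partial>\<^sub>i v\<close> are
  \<open>S\<close>-orthogonal to \<open>v\<close>; differentiating once more gives \<open>P\<^sub>i\<^sup>T S P\<^sub>j = - F H\<^sub>j\<^sub>i\<close>.
  Hence in the basis \<open>(P\<^sub>1, \<dots>, P\<^sub>n, e\<^sub>T, v)\<close> of \<open>\<real>\<^sup>n\<^sup>+\<^sup>2\<close> the form \<open>S\<close> is block triangular,
  and \<open>det S = - F\<^sup>2 (- F)\<^sup>n det H\<close>. On the quadric \<open>\<Delta>\<^sub>y = F\<^sup>2\<close>, and the branch of the
  square root chosen by \<open>y\<close> is exactly the sign of \<open>F\<close>.
\<close>

lemma sum_ext_idx:
  "(\<Sum>k\<in>(UNIV::'n::finite ext_idx set). f k) = (\<Sum>i\<in>UNIV. f (X i)) + f T + f C"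
proof -
  have "(\<Sum>k\<in>(UNIV::'n ext_idx set). f k) = sum f (range X) + sum f {T, C}"
    unfolding UNIV_ext_idx by (rule sum.union_disjoint) auto
  also have "sum f (range X) = (\<Sum>i\<in>UNIV. f (X i))"
    by (subst sum.reindex) (auto simp: inj_def)
  finally show ?thesis by (simp add: add.assoc)
qed

lemma prod_ext_idx:
  "(\<Prod>k\<in>(UNIV::'n::finite ext_idx set). f k) = (\<Prod>i\<in>UNIV. f (X i)) * f T * f C"
proof -
  have "(\<Prod>k\<in>(UNIV::'n ext_idx set). f k) = prod f (range X) * prod f {T, C}"
    unfolding UNIV_ext_idx by (rule prod.union_disjoint) auto
  also have "prod f (range X) = (\<Prod>i\<in>UNIV. f (X i))"
    by (subst prod.reindex) (auto simp: inj_def)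
  finally show ?thesis by (simp add: mult.assoc)
qed

lemma permutes_range_X_iff:
  "p permutes (range X :: 'n ext_idx set) \<longleftrightarrow> p permutes UNIV \<and> p T = T \<and> p C = C"
proof -
  have "x \<notin> range X \<longleftrightarrow> x = T \<or> x = C" for x :: "'n ext_idx"
    by (cases x) auto
  then show ?thesis
    unfolding permutes_def by auto
qed

lemma det_ext_idx_block:
  fixes A :: "'a::comm_ring_1^('n::finite ext_idx)^('n ext_idx)"
  assumes row_C: "\<And>k. k \<noteq> C \<Longrightarrow> A $ C $ k = 0"
    and col_T: "\<And>k. k \<noteq> T \<Longrightarrow> A $ k $ T = 0"
  shows "det A = A $ C $ C * A $ T $ T * det (\<chi> i j. A $ X i $ X j :: 'a^'n^'n)"
proof -
  let ?term = "\<lambda>p. of_int (sign p) * (\<Prod>k\<in>UNIV. A $ k $ p k)"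
  let ?lift = "\<lambda>q k. if k \<in> range X then X (q (inv X k)) else k"
  have lift: "?lift q = map_permutation UNIV X q" for q :: "'n \<Rightarrow> 'n"
    by (simp add: fun_eq_iff map_permutation_def restrict_id_def)
  have "det A = (\<Sum>p | p permutes UNIV. ?term p)"
    unfolding det_def ..
  also have "\<dots> = (\<Sum>p | p permutes range X. ?term p)"
  proof (rule sum.mono_neutral_right)
    show "finite {p. p permutes (UNIV :: 'n ext_idx set)}"
      by (simp add: finite_permutations)
    show "{p. p permutes range X} \<subseteq> {p. p permutes (UNIV :: 'n ext_idx set)}"
      by (auto intro: permutes_subset)
    show "\<forall>p \<in> {p. p permutes UNIV} - {p. p permutes range X}. ?term p = 0"
    proof
      fix p assume "p \<in> {p. p permutes UNIV} - {p. p permutes (range X :: 'n ext_idx set)}"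
      then have p: "p permutes UNIV" and moved: "p T \<noteq> T \<or> p C \<noteq> C"
        by (auto simp: permutes_range_X_iff)
      from moved have "\<exists>k. A $ k $ p k = 0"
      proof
        assume "p T \<noteq> T"
        then have "inv p T \<noteq> T" and "p (inv p T) = T"
          using permutes_inverses(1)[OF p] by metis+
        then show ?thesis using col_T by metis
      qed (use row_C in metis)
      then show "?term p = 0" by (metis UNIV_I finite mult_zero_right prod_zero)
    qed
  qed
  also have "\<dots> = (\<Sum>q | q permutes (UNIV :: 'n set). ?term (?lift q))"
    by (rule sum.reindex_bij_betw[symmetric])
      (rule bij_betw_permutations, simp add: bij_betw_def inj_def)
  also have "\<dots> = (\<Sum>q | q permutes (UNIV :: 'n set).
      A $ C $ C * A $ T $ T * (of_int (sign q) * (\<Prod>i\<in>UNIV. A $ X i $ X (q i))))"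
  proof (rule sum.cong)
    fix q :: "'n \<Rightarrow> 'n" assume "q \<in> {q. q permutes UNIV}"
    then have "sign (?lift q) = sign q"
      unfolding lift by (intro sign_map_permutation) (auto simp: inj_def)
    moreover have "?lift q (X i) = X (q i)" "?lift q T = T" "?lift q C = C" for i
      by (auto simp: inj_def)
    ultimately show "?term (?lift q) = A $ C $ C * A $ T $ T * (of_int (sign q) * (\<Prod>i\<in>UNIV. A $ X i $ X (q i)))"
      by (simp only: prod_ext_idx) (simp add: algebra_simps)
  qed simp
  also have "\<dots> = A $ C $ C * A $ T $ T * det (\<chi> i j. A $ X i $ X j :: 'a^'n^'n)"
    by (simp add: det_def sum_distrib_left)
  finally show ?thesis .
qed

lemma inner_matrix_vector_transpose:
  fixes A :: "real^'m::finite^'m"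
  shows "u \<bullet> (A *v v) = v \<bullet> (transpose A *v u)"
  by (metis dot_lmul_matrix inner_commute vector_transpose_matrix)

lemma congruence_matrix_nth:
  fixes S :: "real^'m::finite^'m"
  shows "((\<chi> a. u a) ** S ** transpose (\<chi> b. v b)) $ a $ b = u a \<bullet> (S *v v b)"
proof -
  have "((\<chi> a. u a) ** S ** transpose (\<chi> b. v b)) $ a $ b
      = (\<Sum>l\<in>UNIV. \<Sum>k\<in>UNIV. u a $ k * S $ k $ l * v b $ l)"
    by (simp add: matrix_matrix_mult_def transpose_def sum_distrib_right)
  also have "\<dots> = (\<Sum>k\<in>UNIV. \<Sum>l\<in>UNIV. u a $ k * S $ k $ l * v b $ l)"
    by (rule sum.swap)
  also have "\<dots> = u a \<bullet> (S *v v b)"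
    by (simp add: inner_vec_def matrix_vector_mult_def sum_distrib_left mult.assoc)
  finally show ?thesis .
qed

lemma det_scaleR: "det (c *\<^sub>R A) = c ^ CARD('n) * det (A :: real^'n::finite^'n)"
  by (simp add: det_def prod.distrib sum_distrib_left mult.left_commute)

lemma det_in_adapted_basis:
  fixes S :: "real^('n::finite ext_idx)^('n ext_idx)"
    and g :: "real^('n ext_idx)" and P :: "'n \<Rightarrow> real^('n ext_idx)"
  assumes sym: "transpose S = S"
    and P_X: "\<And>i j. P i $ X j = (if i = j then 1 else 0)"
    and P_C: "\<And>i. P i $ C = 0"
    and g_C: "g $ C = 1"
    and g_null: "g \<bullet> (S *v g) = 0"
    and P_orth: "\<And>i. P i \<bullet> (S *v g) = 0"
  shows "det S = - ((S *v g) $ T)\<^sup>2 * det (\<chi> i j. P i \<bullet> (S *v P j))"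
proof -
  let ?e = "axis T 1 :: real^('n ext_idx)"
  define u where "u k = (case k of X i \<Rightarrow> P i | T \<Rightarrow> ?e | C \<Rightarrow> g)" for k
  \<comment> \<open>Swapping \<open>e\<^sub>T\<close> and \<open>g\<close> on one side makes the congruent matrix block triangular.\<close>
  define v where "v k = u (Transposition.transpose T C k)" for k
  define N where "N = (\<chi> a. u a) ** S ** transpose (\<chi> b. v b)"
  have S_comm: "a \<bullet> (S *v b) = b \<bullet> (S *v a)" for a b
    using inner_matrix_vector_transpose[of a S b] sym by simp
  have N_nth: "N $ a $ b = u a \<bullet> (S *v v b)" for a b
    unfolding N_def by (rule congruence_matrix_nth)
  have v_simps: "v (X i) = P i" "v T = g" "v C = ?e" for i
    by (simp_all add: v_def u_def Transposition.transpose_def)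
  have e_S: "?e \<bullet> (S *v w) = (S *v w) $ T" for w
    by (simp add: inner_axis')
  have g_P: "g \<bullet> (S *v P i) = 0" for i
    using S_comm P_orth by metis
  have g_e: "g \<bullet> (S *v ?e) = (S *v g) $ T"
    using S_comm e_S by metis
  have det_u: "det (\<chi> a. u a) = 1"
  proof -
    let ?U = "transpose (\<chi> a. u a)"
    have "det (\<chi> a. u a) = det ?U"
      by (rule det_transpose[symmetric])
    also have "\<dots> = ?U $ C $ C * ?U $ T $ T * det (\<chi> i j. ?U $ X i $ X j :: real^'n^'n)"
      by (rule det_ext_idx_block) (auto simp: transpose_def u_def P_C axis_def split: ext_idx.split)
    also have "(\<chi> i j. ?U $ X i $ X j :: real^'n^'n) = mat 1"
      by (simp add: transpose_def u_def P_X mat_def vec_eq_iff)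
    also have "?U $ C $ C = 1"
      by (simp add: transpose_def u_def g_C)
    also have "?U $ T $ T = 1"
      by (simp add: transpose_def u_def)
    finally show ?thesis
      by simp
  qed
  have det_v: "det (\<chi> b. v b) = - 1"
  proof -
    have "(\<chi> b. v b) = (\<chi> b. (\<chi> a. u a) $ Transposition.transpose T C b)"
      by (simp add: v_def)
    also have "det \<dots> = - det (\<chi> a. u a)"
      by (subst det_permute_rows) (auto simp: permutes_swap_id sign_swap_id)
    finally show ?thesis using det_u by simp
  qed
  have "det N = N $ C $ C * N $ T $ T * det (\<chi> i j. N $ X i $ X j :: real^'n^'n)"
  proof (rule det_ext_idx_block)
    show "N $ C $ k = 0" if "k \<noteq> C" for k
      using that by (cases k) (auto simp: N_nth u_def v_simps g_null g_P)
    show "N $ k $ T = 0" if "k \<noteq> T" for k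
      using that by (cases k) (auto simp: N_nth u_def v_simps g_null P_orth)
  qed
  also have "\<dots> = ((S *v g) $ T)\<^sup>2 * det (\<chi> i j. P i \<bullet> (S *v P j))"
    by (simp add: N_nth u_def v_simps e_S g_e power2_eq_square)
  finally have "det N = ((S *v g) $ T)\<^sup>2 * det (\<chi> i j. P i \<bullet> (S *v P j))" .
  moreover have "det N = - det S"
    by (simp add: N_def det_mul det_u det_v)
  ultimately show ?thesis by simp
qed

lemma has_derivative_vanishing_on_open:
  assumes "open \<Omega>" "z \<in> \<Omega>" "\<forall>w\<in>\<Omega>. f w = 0" "(f has_derivative f') (at z)"
  shows "f' h = 0"
proof -
  have "((\<lambda>w. 0) has_derivative f') (at z)"
    using assms by (auto intro: has_derivative_transform_within_open)
  then have "f' = (\<lambda>h. 0)"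
    using has_derivative_const has_derivative_unique by blast
  then show ?thesis by simp
qed

lemma derivative_of_vanishing_bilinear_form:
  fixes f g :: "'a::real_normed_vector \<Rightarrow> real^'m::finite"
  assumes "open \<Omega>" "z \<in> \<Omega>" "\<forall>w\<in>\<Omega>. f w \<bullet> (A *v g w) = 0"
    and "(f has_derivative f') (at z)" "(g has_derivative g') (at z)"
  shows "f' h \<bullet> (A *v g z) + f z \<bullet> (A *v g' h) = 0"
proof -
  have "((\<lambda>w. f w \<bullet> (A *v g w)) has_derivative (\<lambda>h. f z \<bullet> (A *v g' h) + f' h \<bullet> (A *v g z))) (at z)"
    using assms(4) bounded_linear.has_derivative[OF matrix_vector_mul_bounded_linear assms(5)]
    by (rule has_derivative_inner)
  from has_derivative_vanishing_on_open[OF assms(1-3) this] show ?thesis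
    by (simp add: add.commute)
qed

definition ext_lin :: "real^'n::finite \<Rightarrow> real \<Rightarrow> real^('n ext_idx)" where
  "ext_lin h s = (\<chi> k. case k of X i \<Rightarrow> h $ i | T \<Rightarrow> s | C \<Rightarrow> 0)"

lemma ext_lin_nth [simp]:
  "ext_lin h s $ X i = h $ i" "ext_lin h s $ T = s" "ext_lin h s $ C = 0"
  by (simp_all add: ext_lin_def)

lemma ext_vec_eq_ext_lin: "ext_vec x t = ext_lin x 0 + t *\<^sub>R axis T 1 + axis C 1"
  by (simp add: vec_eq_iff ext_vec_def ext_lin_def axis_def split: ext_idx.split)

lemma ext_lin_eq: "ext_lin h s = ext_lin h 0 + s *\<^sub>R axis T 1"
  by (simp add: vec_eq_iff ext_lin_def axis_def split: ext_idx.split)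

lemma bounded_linear_ext_lin: "bounded_linear (\<lambda>h. ext_lin h 0)"
proof -
  have "linear (\<lambda>h. ext_lin h 0)"
    by (rule linearI) (simp_all add: vec_eq_iff ext_lin_def split: ext_idx.split)
  then show ?thesis by (simp add: linear_conv_bounded_linear)
qed

lemma has_derivative_ext_vec_graph:
  assumes "(y has_derivative y') (at z)"
  shows "((\<lambda>w. ext_vec w (y w)) has_derivative (\<lambda>h. ext_lin h (y' h))) (at z)"
proof -
  have "((\<lambda>w. ext_lin w 0 + y w *\<^sub>R axis T 1 + axis C 1)
      has_derivative (\<lambda>h. ext_lin h 0 + y' h *\<^sub>R axis T 1)) (at z)"
    by (auto intro!: derivative_eq_intros bounded_linear.has_derivative[OF bounded_linear_ext_lin] assms)
  then show ?thesis
    by (simp only: ext_vec_eq_ext_lin ext_lin_eq[symmetric])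
qed

lemma quadric_tangent_orthogonal:
  fixes Q :: "real^('n::finite ext_idx)^('n ext_idx)"
  assumes "open \<Omega>" "x \<in> \<Omega>" and y_diff: "\<forall>x\<in>\<Omega>. y differentiable (at x)"
    and quadric: "\<forall>x\<in>\<Omega>. ext_vec x (y x) \<bullet> (Q *v ext_vec x (y x)) = 0"
  shows "ext_lin (axis i 1) (partial_deriv y i x) \<bullet> ((Q + transpose Q) *v ext_vec x (y x)) = 0"
proof -
  let ?g = "ext_vec x (y x)" and ?g' = "\<lambda>h. ext_lin h (frechet_derivative y (at x) h)"
  have "((\<lambda>w. ext_vec w (y w)) has_derivative ?g') (at x)"
    using y_diff \<open>x \<in> \<Omega>\<close> frechet_derivative_works has_derivative_ext_vec_graph by blast
  from derivative_of_vanishing_bilinear_form[OF assms(1,2) quadric this this]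
  have "?g' (axis i 1) \<bullet> (Q *v ?g) + ?g \<bullet> (Q *v ?g' (axis i 1)) = 0" .
  then show ?thesis
    by (simp add: partial_deriv_def inner_matrix_vector_transpose[of ?g] matrix_vector_mult_add_rdistrib
        inner_add_right)
qed

lemma quadric_second_order:
  fixes Q :: "real^('n::finite ext_idx)^('n ext_idx)"
  assumes "open \<Omega>" "x \<in> \<Omega>" and y_diff: "\<forall>x\<in>\<Omega>. y differentiable (at x)"
    and quadric: "\<forall>x\<in>\<Omega>. ext_vec x (y x) \<bullet> (Q *v ext_vec x (y x)) = 0"
    and dy_diff: "partial_deriv y j differentiable (at x)"
  defines "S \<equiv> Q + transpose Q"
  shows "ext_lin (axis j 1) (partial_deriv y j x) \<bullet> (S *v ext_lin (axis i 1) (partial_deriv y i x))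
      + hessian y x $ i $ j * (S *v ext_vec x (y x)) $ T = 0"
proof -
  let ?P = "\<lambda>w. ext_lin (axis j 1) (partial_deriv y j w)"
  let ?g' = "\<lambda>h. ext_lin h (frechet_derivative y (at x) h)"
  let ?P' = "\<lambda>h. frechet_derivative (partial_deriv y j) (at x) h *\<^sub>R axis T 1"
  have dg: "((\<lambda>w. ext_vec w (y w)) has_derivative ?g') (at x)"
    using y_diff \<open>x \<in> \<Omega>\<close> frechet_derivative_works has_derivative_ext_vec_graph by blast
  have dP: "(?P has_derivative ?P') (at x)"
    using dy_diff frechet_derivative_works
    by (subst ext_lin_eq) (auto intro!: derivative_eq_intros)
  have "\<forall>w\<in>\<Omega>. ?P w \<bullet> (S *v ext_vec w (y w)) = 0"
    unfolding S_def using quadric_tangent_orthogonal[OF assms(1) _ y_diff quadric] by blast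
  from derivative_of_vanishing_bilinear_form[OF assms(1,2) this dP dg]
  have "?P' (axis i 1) \<bullet> (S *v ext_vec x (y x)) + ?P x \<bullet> (S *v ?g' (axis i 1)) = 0" .
  then show ?thesis
    by (simp add: hessian_def partial_deriv_def inner_axis' algebra_simps)
qed

lemma det_hessian_identity:
  fixes Q :: "real^('n::finite ext_idx)^('n ext_idx)"
  assumes "open \<Omega>" "x \<in> \<Omega>" and y_diff: "\<forall>x\<in>\<Omega>. y differentiable (at x)"
    and quadric: "\<forall>x\<in>\<Omega>. ext_vec x (y x) \<bullet> (Q *v ext_vec x (y x)) = 0"
    and dy_diff: "\<forall>j. partial_deriv y j differentiable (at x)"
  defines "S \<equiv> Q + transpose Q"
  defines "F \<equiv> (S *v ext_vec x (y x)) $ T"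
  shows "det S = - F\<^sup>2 * (- F) ^ CARD('n) * det (hessian y x)"
proof -
  let ?g = "ext_vec x (y x)"
  define P where "P i = ext_lin (axis i 1) (partial_deriv y i x)" for i
  have "?g \<bullet> (S *v ?g) = 2 * (?g \<bullet> (Q *v ?g))"
    using inner_matrix_vector_transpose[of ?g Q ?g]
    by (simp add: S_def matrix_vector_mult_add_rdistrib inner_add_right)
  then have g_null: "?g \<bullet> (S *v ?g) = 0"
    using quadric \<open>x \<in> \<Omega>\<close> by simp
  have "det S = - F\<^sup>2 * det (\<chi> i j. P i \<bullet> (S *v P j))"
    unfolding F_def
  proof (rule det_in_adapted_basis)
    show "transpose S = S"
      by (simp add: S_def vec_eq_iff transpose_def)
    show "P i \<bullet> (S *v ?g) = 0" for i
      unfolding P_def S_def by (rule quadric_tangent_orthogonal[OF assms(1-4)])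
    show "?g \<bullet> (S *v ?g) = 0"
      by (rule g_null)
  qed (simp_all add: P_def ext_vec_def axis_def)
  also have "(\<chi> i j. P i \<bullet> (S *v P j)) = (- F) *\<^sub>R transpose (hessian y x)"
  proof -
    have second_order: "P i \<bullet> (S *v P j) + hessian y x $ j $ i * F = 0" for i j
      unfolding P_def S_def F_def by (rule quadric_second_order[OF assms(1-4) dy_diff[rule_format]])
    have "P i \<bullet> (S *v P j) = - F * hessian y x $ j $ i" for i j
      using second_order[of i j] by (simp add: algebra_simps eq_neg_iff_add_eq_0)
    then show ?thesis
      by (simp add: vec_eq_iff transpose_def)
  qed
  finally show ?thesis
    by (simp only: det_scaleR det_transpose mult.assoc)
qed

lemma ext_vec_quadratic_form:
  fixes Q :: "real^('n::finite ext_idx)^('n ext_idx)"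
  shows "ext_vec x t \<bullet> (Q *v ext_vec x t) = qalpha Q * t\<^sup>2 + qbeta Q x * t + qgamma Q x"
proof -
  have e: "ext_vec x t $ X i = x $ i" "ext_vec x t $ T = t" "ext_vec x t $ C = 1" for i
    by (simp_all add: ext_vec_def)
  have "ext_vec x t \<bullet> (Q *v ext_vec x t)
      = (\<Sum>r\<in>UNIV. \<Sum>c\<in>UNIV. ext_vec x t $ r * Q $ r $ c * ext_vec x t $ c)"
    by (simp add: inner_vec_def matrix_vector_mult_def sum_distrib_left mult.assoc)
  also have "\<dots> = (\<Sum>i\<in>UNIV. \<Sum>j\<in>UNIV. Q $ X i $ X j * x $ i * x $ j)
      + (\<Sum>i\<in>UNIV. (Q $ X i $ T + Q $ T $ X i) * x $ i) * t
      + (\<Sum>i\<in>UNIV. (Q $ X i $ C + Q $ C $ X i) * x $ i)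
      + Q $ T $ T * t\<^sup>2 + (Q $ T $ C + Q $ C $ T) * t + Q $ C $ C"
    by (simp add: sum_ext_idx e sum.distrib sum_distrib_left sum_distrib_right
        power2_eq_square algebra_simps)
  finally show ?thesis
    by (simp add: qalpha_def qbeta_def qgamma_def algebra_simps)
qed

lemma symmetrized_mult_ext_vec_T:
  fixes Q :: "real^('n::finite ext_idx)^('n ext_idx)"
  shows "((Q + transpose Q) *v ext_vec x t) $ T = 2 * qalpha Q * t + qbeta Q x"
  by (simp add: matrix_vector_mult_def transpose_def sum_ext_idx ext_vec_def qalpha_def qbeta_def
      algebra_simps)

lemma qdiscr_at_root:
  fixes Q :: "real^('n::finite ext_idx)^('n ext_idx)"
  assumes "ext_vec x t \<bullet> (Q *v ext_vec x t) = 0"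
  shows "qdiscr Q x = (2 * qalpha Q * t + qbeta Q x)\<^sup>2"
proof -
  have gamma: "qgamma Q x = - (qalpha Q * t\<^sup>2 + qbeta Q x * t)"
    using assms by (simp add: ext_vec_quadratic_form)
  show ?thesis
    unfolding qdiscr_def gamma by (simp add: power2_eq_square algebra_simps)
qed

lemma power2_powr_half_plus_one: "((s::real)\<^sup>2) powr (real n / 2 + 1) = \<bar>s\<bar> ^ (n + 2)"
proof (cases "s = 0")
  case False
  then have "\<bar>s\<bar> > 0" by simp
  have "(s\<^sup>2) powr (real n / 2 + 1) = (\<bar>s\<bar> powr 2) powr (real n / 2 + 1)"
    using \<open>\<bar>s\<bar> > 0\<close> by (simp add: powr_realpow)
  also have "\<dots> = \<bar>s\<bar> powr (2 * (real n / 2 + 1))"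
    by (rule powr_powr)
  also have "\<dots> = \<bar>s\<bar> powr real (n + 2)"
    by (rule arg_cong[where f = "(powr) \<bar>s\<bar>"]) simp
  also have "\<dots> = \<bar>s\<bar> ^ (n + 2)"
    using \<open>\<bar>s\<bar> > 0\<close> by (rule powr_realpow)
  finally show ?thesis .
qed simp

lemma det_hessian_powr_discr:
  fixes Q :: "real^('n::finite ext_idx)^('n ext_idx)"
  assumes "open \<Omega>" "C2_on \<Omega> y"
    and quadric: "\<forall>x\<in>\<Omega>. ext_vec x (y x) \<bullet> (Q *v ext_vec x (y x)) = 0"
    and "x \<in> \<Omega>"
  defines "F \<equiv> 2 * qalpha Q * y x + qbeta Q x"
  shows "0 \<le> F \<Longrightarrow>
      det (- hessian y x) * qdiscr Q x powr (real CARD('n) / 2 + 1) = - det (Q + transpose Q)"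
    and "F \<le> 0 \<Longrightarrow>
      det (hessian y x) * qdiscr Q x powr (real CARD('n) / 2 + 1) = - det (Q + transpose Q)"
proof -
  let ?n = "CARD('n)"
  have y_diff: "\<forall>x\<in>\<Omega>. y differentiable (at x)"
    and dy_diff: "\<forall>j. partial_deriv y j differentiable (at x)"
    using assms(2,4) by (auto simp: C2_on_def)
  have det_Q: "- det (Q + transpose Q) = F\<^sup>2 * (- F) ^ ?n * det (hessian y x)"
    using det_hessian_identity[OF assms(1,4) y_diff quadric dy_diff]
    by (simp add: F_def symmetrized_mult_ext_vec_T)
  have discr: "qdiscr Q x powr (real ?n / 2 + 1) = \<bar>F\<bar> ^ (?n + 2)"
    using qdiscr_at_root[of x "y x" Q] quadric \<open>x \<in> \<Omega>\<close>
    by (simp add: F_def power2_powr_half_plus_one)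
  have det_minus: "det (- hessian y x) = (- 1) ^ ?n * det (hessian y x)"
    using det_scaleR[of "- 1" "hessian y x"] by simp
  show "det (- hessian y x) * qdiscr Q x powr (real ?n / 2 + 1) = - det (Q + transpose Q)"
    if "0 \<le> F"
    unfolding det_Q discr det_minus using that
    by (simp add: power_add power_minus[of F] power2_eq_square algebra_simps)
  show "det (hessian y x) * qdiscr Q x powr (real ?n / 2 + 1) = - det (Q + transpose Q)"
    if "F \<le> 0"
    unfolding det_Q discr using that by (simp add: power_add power2_eq_square algebra_simps)
qed

theorem theorem1:
  fixes \<Omega> :: "(real^'n) set" and y :: "real^'n \<Rightarrow> real"
    and Q :: "real^('n ext_idx)^('n ext_idx)"
  assumes "open \<Omega>"
    and "C2_on \<Omega> y"
    and "\<forall>x\<in>\<Omega>. ext_vec x (y x) \<bullet> (Q *v ext_vec x (y x)) = 0"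
  shows "\<forall>x\<in>\<Omega>.
     (qalpha Q \<noteq> 0 \<longrightarrow>
        (y x = (- qbeta Q x + sqrt (qdiscr Q x)) / (2 * qalpha Q) \<longrightarrow>
           det (- hessian y x) * qdiscr Q x powr (real CARD('n) / 2 + 1) = - det (Q + transpose Q)) \<and>
        (y x = (- qbeta Q x - sqrt (qdiscr Q x)) / (2 * qalpha Q) \<longrightarrow>
           det (hessian y x) * qdiscr Q x powr (real CARD('n) / 2 + 1) = - det (Q + transpose Q))) \<and>
     (qalpha Q = 0 \<longrightarrow>
        (qbeta Q x \<ge> 0 \<longrightarrow>
           det (- hessian y x) * qdiscr Q x powr (real CARD('n) / 2 + 1) = - det (Q + transpose Q)) \<and>
        (qbeta Q x \<le> 0 \<longrightarrow>
           det (hessian y x) * qdiscr Q x powr (real CARD('n) / 2 + 1) = - det (Q + transpose Q)))"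
proof -
  let ?F = "\<lambda>x. 2 * qalpha Q * y x + qbeta Q x"
  have sqrt_discr: "sqrt (qdiscr Q x) = \<bar>?F x\<bar>" if "x \<in> \<Omega>" for x
    using qdiscr_at_root[of x "y x" Q] assms(3) that by simp
  have "0 \<le> ?F x"
    if "x \<in> \<Omega>" "qalpha Q \<noteq> 0" "y x = (- qbeta Q x + sqrt (qdiscr Q x)) / (2 * qalpha Q)" for x
  proof -
    from that have "?F x = sqrt (qdiscr Q x)" by (simp add: field_simps)
    then show ?thesis using sqrt_discr[OF that(1)] by simp
  qed
  moreover have "?F x \<le> 0"
    if "x \<in> \<Omega>" "qalpha Q \<noteq> 0" "y x = (- qbeta Q x - sqrt (qdiscr Q x)) / (2 * qalpha Q)" for x
  proof -
    from that have "?F x = - sqrt (qdiscr Q x)" by (simp add: field_simps)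
    then show ?thesis using sqrt_discr[OF that(1)] by simp
  qed
  ultimately show ?thesis
    using det_hessian_powr_discr[OF assms] by simp
qed

end
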